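(* Let $\zeta>0$ and $1\le k<d$, and let $\alpha_1\ge\cdots\ge\alpha_k>\zeta\ge\alpha_{k+1}\ge\cdots\ge\alpha_d\ge0$. Let $\beta_1,\dots,\beta_d$ be a permutation of $\alpha_1,\dots,\alpha_d$. Define $\alpha'_i=\alpha_i$ for $i\le k$ and $\alpha'_{k+1}=\zeta$, and let $L=\min\{k,\ln(\alpha_1/\zeta)\}$. Then \[ \sum_{i=1}^d(\sqrt{\alpha_i}-\sqrt{\beta_i})^2\le4\sum_{j=1}^k\frac{\alpha'_j-\alpha'_{j+1}}{\alpha'_j}\sum_{i=1}^j(\alpha_i-\beta_i)+d\zeta+8kL\zeta. \] *)

theory Defs
  imports "HOL-Analysis.Analysis"
begin

end

theory Submission
  imports Defs
begin

text \<open>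
  Write \<open>S\<^sub>j = \<Sum>\<^sub>i\<^sub>\<le>\<^sub>j (\<alpha>\<^sub>i - \<beta>\<^sub>i)\<close>. For every threshold \<open>t\<close> with
  \<open>\<alpha>\<^sub>j\<^sub>+\<^sub>1 \<le> t \<le> \<alpha>\<^sub>j\<close> one has \<open>S\<^sub>j = \<Sum>\<^sub>i\<^sub>\<le>\<^sub>j (t - \<beta>\<^sub>i)\<^sup>+ + \<Sum>\<^sub>i\<^sub>>\<^sub>j (\<beta>\<^sub>i - t)\<^sup>+\<close>, because
  the \<open>\<alpha>\<^sub>i\<close> exceeding \<open>t\<close> are exactly the first \<open>j\<close> and the \<open>\<beta>\<^sub>i\<close> are a rearrangement
  of the \<open>\<alpha>\<^sub>i\<close>. Using this for \<open>t = \<alpha>\<^sub>j\<close> and \<open>t = \<alpha>'\<^sub>j\<^sub>+\<^sub>1\<close> turns the right-hand side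
  into a sum over coordinates \<open>i\<close> of nonnegative hinge terms. For a fixed \<open>i\<close> these terms,
  weighted by \<open>(\<alpha>'\<^sub>j - \<alpha>'\<^sub>j\<^sub>+\<^sub>1)/\<alpha>'\<^sub>j\<close>, telescope to roughly
  \<open>(\<alpha>\<^sub>i - \<beta>\<^sub>i)\<^sup>2 / max \<alpha>\<^sub>i \<beta>\<^sub>i\<close>, which dominates \<open>(\<surd>\<alpha>\<^sub>i - \<surd>\<beta>\<^sub>i)\<^sup>2\<close>. The
  telescoping stops at the threshold \<open>\<zeta>\<close>; this costs at most \<open>\<zeta>\<close> per coordinate, plus
  \<open>L\<zeta>\<close> for each of the \<open>k\<close> coordinates with \<open>\<beta>\<^sub>i > \<zeta>\<close>: when moreover
  \<open>\<alpha>\<^sub>i \<le> \<zeta>\<close>, the missing part is \<open>\<zeta>(\<beta>\<^sub>i - \<zeta>)/\<beta>\<^sub>i\<close>, and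
  \<open>(\<beta>\<^sub>i - \<zeta>)/\<beta>\<^sub>i \<le> min 1 (ln (\<beta>\<^sub>i/\<zeta>)) \<le> L\<close>.
\<close>

lemma sqrt_diff_square_le:
  fixes a x :: real
  assumes "0 \<le> x" "x \<le> a"
  shows "(sqrt a - sqrt x)^2 \<le> a"
proof -
  have "x = sqrt x * sqrt x" using assms by simp
  also have "\<dots> \<le> sqrt a * sqrt x" using assms by (intro mult_right_mono) auto
  finally have "x \<le> sqrt a * sqrt x" .
  moreover have "(sqrt a - sqrt x)^2 = a - 2 * (sqrt a * sqrt x) + x"
    using assms by (simp add: power2_eq_square algebra_simps)
  ultimately show ?thesis using assms by linarith
qed

lemma sqrt_diff_square_le_max:
  fixes a x :: real
  assumes "0 \<le> x" "0 \<le> a"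
  shows "(sqrt a - sqrt x)^2 \<le> max a x"
  using sqrt_diff_square_le[of x a] sqrt_diff_square_le[of a x] assms
  by (cases "x \<le> a") (auto simp: power2_commute)

lemma sqrt_diff_square_le_quotient:
  fixes a x :: real
  assumes "0 \<le> x" "0 < a"
  shows "(sqrt a - sqrt x)^2 \<le> (a - x)^2 / a"
proof -
  have "(sqrt a - sqrt x)^2 * (sqrt a + sqrt x)^2 = (a - x)^2"
    using assms by (simp add: power_mult_distrib[symmetric] algebra_simps power2_eq_square)
  moreover have "a \<le> (sqrt a + sqrt x)^2" using assms by (simp add: power2_eq_square algebra_simps)
  ultimately have "(sqrt a - sqrt x)^2 * a \<le> (a - x)^2"
    by (metis mult_left_mono zero_le_power2)
  with assms show ?thesis by (simp add: field_simps)
qed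

lemma sum_telescope:
  fixes F :: "nat \<Rightarrow> 'a::ab_group_add"
  assumes "m \<le> n + 1"
  shows "(\<Sum>j=m..n. F j - F (j + 1)) = F m - F (n + 1)"
  using sum_Suc_diff[of m n "\<lambda>j. - F j"] assms by simp

lemma sum_split_at:
  fixes f :: "nat \<Rightarrow> 'a::comm_monoid_add"
  assumes "j \<le> d"
  shows "(\<Sum>i=1..d. f i) = (\<Sum>i=1..j. f i) + (\<Sum>i=j+1..d. f i)"
  using sum.ub_add_nat[of 1 j f "d - j"] assms by simp

lemma square_hinge_below_step_le:
  fixes p q a x :: real
  assumes "0 < q" "q \<le> p" "p \<le> a"
  shows "((max 0 (p - x))^2 - (max 0 (q - x))^2) / (2 * a) \<le> (p - q) / p * max 0 (p - x)"
proof -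
  define u u' where "u = max 0 (p - x)" and "u' = max 0 (q - x)"
  have u: "0 \<le> u'" "u' \<le> u" "u - u' \<le> p - q" using assms by (auto simp: u_def u'_def)
  have "u^2 - u'^2 = (u - u') * (u + u')" by (simp add: power2_eq_square algebra_simps)
  also have "\<dots> \<le> (p - q) * (2 * u)" using u by (intro mult_mono) auto
  finally have "u^2 - u'^2 \<le> (p - q) * (2 * u)" .
  then have "(u^2 - u'^2) / (2 * a) \<le> (p - q) * (2 * u) / (2 * a)"
    using assms by (intro divide_right_mono) auto
  also have "\<dots> = (p - q) * u / a" by simp
  also have "\<dots> \<le> (p - q) * u / p"
    using assms u by (intro divide_left_mono mult_nonneg_nonneg) auto
  finally show ?thesis by (simp add: u_def u'_def)
qed

lemma square_hinge_above_step_le: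
  fixes p q x :: real
  assumes "0 < q" "q \<le> p" "0 < x"
  shows "((max 0 (x - q))^2 - (max 0 (x - p))^2) / (2 * x) \<le> (p - q) / p * max 0 (x - q)"
proof (cases "p \<le> x")
  case True
  define v v' where "v = x - p" and "v' = x - q"
  have v: "0 \<le> v" "v \<le> v'" "v' - v = p - q" using assms True by (auto simp: v_def v'_def)
  have "v'^2 - v^2 = (v' - v) * (v' + v)" by (simp add: power2_eq_square algebra_simps)
  also have "\<dots> \<le> (p - q) * (2 * v')" using v by (intro mult_mono) auto
  finally have "v'^2 - v^2 \<le> (p - q) * (2 * v')" .
  then have "(v'^2 - v^2) / (2 * x) \<le> (p - q) * (2 * v') / (2 * x)"
    using assms by (intro divide_right_mono) auto
  also have "\<dots> = (p - q) * v' / x" by simp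
  also have "\<dots> \<le> (p - q) * v' / p"
    using assms v True by (intro divide_left_mono mult_nonneg_nonneg) auto
  finally show ?thesis using True assms by (simp add: v_def v'_def)
next
  case False
  show ?thesis
  proof (cases "q < x")
    case True
    have "(x - q) / x \<le> (p - q) / p"
      using assms False by (simp add: field_simps)
    then have "(x - q) * ((x - q) / x) \<le> (x - q) * ((p - q) / p)"
      using True by (intro mult_left_mono) auto
    moreover have "(x - q)^2 / (2 * x) \<le> (x - q) * ((x - q) / x)"
      using assms by (simp add: power2_eq_square divide_left_mono)
    ultimately show ?thesis using True False by (simp add: mult.commute)
  qed (use False in simp)
qed

locale sqrt_rearrangement =
  fixes \<zeta> :: real and k d :: nat and \<alpha> \<beta> :: "nat \<Rightarrow> real" and \<sigma> :: "nat \<Rightarrow> nat"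
  assumes zeta_pos: "\<zeta> > 0" and k_pos: "1 \<le> k" and k_less_d: "k < d"
    and alpha_antimono: "\<And>i j. 1 \<le> i \<Longrightarrow> i \<le> j \<Longrightarrow> j \<le> d \<Longrightarrow> \<alpha> j \<le> \<alpha> i"
    and alpha_k_gt: "\<alpha> k > \<zeta>" and alpha_Suc_k_le: "\<zeta> \<ge> \<alpha> (k + 1)" and alpha_d_nonneg: "\<alpha> d \<ge> 0"
    and \<sigma>_permutes: "\<sigma> permutes {1..d}" and \<beta>_eq: "\<And>i. \<beta> i = \<alpha> (\<sigma> i)"
begin

definition \<alpha>t :: "nat \<Rightarrow> real" where "\<alpha>t j = (if j \<le> k then \<alpha> j else \<zeta>)"
definition w :: "nat \<Rightarrow> real" where "w j = (\<alpha>t j - \<alpha>t (j + 1)) / \<alpha>t j"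
definition L :: real where "L = min (real k) (ln (\<alpha> 1 / \<zeta>))"

definition hinge :: "nat \<Rightarrow> real \<Rightarrow> nat \<Rightarrow> real" where
  "hinge j t i = (if i \<le> j then max 0 (t - \<beta> i) else max 0 (\<beta> i - t))"

definition share :: "nat \<Rightarrow> real" where
  "share i = (\<Sum>j=1..k. 2 * w j * (hinge j (\<alpha> j) i + hinge j (\<alpha>t (j + 1)) i))"

lemma alpha_nonneg: "1 \<le> i \<Longrightarrow> i \<le> d \<Longrightarrow> 0 \<le> \<alpha> i"
  using alpha_antimono[of i d] alpha_d_nonneg by simp

lemma alpha_gt_zeta: "1 \<le> i \<Longrightarrow> i \<le> k \<Longrightarrow> \<zeta> < \<alpha> i"
  using alpha_antimono[of i k] alpha_k_gt k_less_d by simp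

lemma alpha_le_zeta: "k < i \<Longrightarrow> i \<le> d \<Longrightarrow> \<alpha> i \<le> \<zeta>"
  using alpha_antimono[of "k + 1" i] alpha_Suc_k_le by simp

lemma \<sigma>_in_range: "i \<in> {1..d} \<Longrightarrow> \<sigma> i \<in> {1..d}"
  using permutes_in_image[OF \<sigma>_permutes] by blast

lemma beta_nonneg: "1 \<le> i \<Longrightarrow> i \<le> d \<Longrightarrow> 0 \<le> \<beta> i"
  using \<sigma>_in_range[of i] alpha_nonneg[of "\<sigma> i"] \<beta>_eq by auto

lemma beta_le_alpha_1: "1 \<le> i \<Longrightarrow> i \<le> d \<Longrightarrow> \<beta> i \<le> \<alpha> 1"
  using \<sigma>_in_range[of i] alpha_antimono[of 1 "\<sigma> i"] \<beta>_eq by auto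

lemma sum_beta_eq: "(\<Sum>i=1..d. g (\<beta> i)) = (\<Sum>i=1..d. g (\<alpha> i))"
  using sum.permute[OF \<sigma>_permutes, of "\<lambda>i. g (\<alpha> i)"] by (simp add: \<beta>_eq)

lemma \<alpha>t_pos: "1 \<le> j \<Longrightarrow> 0 < \<alpha>t j"
  using alpha_gt_zeta[of j] zeta_pos by (auto simp: \<alpha>t_def)

lemma \<alpha>t_Suc_le: "1 \<le> j \<Longrightarrow> \<alpha>t (j + 1) \<le> \<alpha>t j"
  using alpha_antimono[of j "j + 1"] k_less_d alpha_gt_zeta[of j] by (auto simp: \<alpha>t_def)

lemma w_nonneg: "1 \<le> j \<Longrightarrow> 0 \<le> w j"
  using \<alpha>t_pos[of j] \<alpha>t_Suc_le[of j] by (simp add: w_def)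

lemma L_nonneg: "0 \<le> L"
proof -
  have "\<alpha> k \<le> \<alpha> 1" using alpha_antimono[of 1 k] k_pos k_less_d by simp
  then have "1 < \<alpha> 1 / \<zeta>" using alpha_k_gt zeta_pos by simp
  then show ?thesis using k_pos by (simp add: L_def)
qed

lemma partial_sum_eq_sum_hinge:
  assumes j: "1 \<le> j" "j \<le> k" and t: "\<alpha> (j + 1) \<le> t" "t \<le> \<alpha> j"
  shows "(\<Sum>i=1..j. \<alpha> i - \<beta> i) = (\<Sum>i=1..d. hinge j t i)"
proof -
  have jd: "j \<le> d" using j k_less_d by simp
  have "(\<Sum>i=1..j. max 0 (\<alpha> i - t)) = (\<Sum>i=1..j. \<alpha> i - t)"
    using alpha_antimono[of _ j] jd t by (intro sum.cong) force+
  moreover have "(\<Sum>i=j+1..d. max 0 (\<alpha> i - t)) = 0"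
    using alpha_antimono[of "j + 1"] t by (intro sum.neutral) force
  ultimately have "(\<Sum>i=1..d. max 0 (\<beta> i - t)) = (\<Sum>i=1..j. \<alpha> i - t)"
    using sum_split_at[OF jd, of "\<lambda>i. max 0 (\<alpha> i - t)"] sum_beta_eq[of "\<lambda>b. max 0 (b - t)"]
    by simp
  moreover have "(\<Sum>i=1..j. \<beta> i - t) = (\<Sum>i=1..j. max 0 (\<beta> i - t)) - (\<Sum>i=1..j. max 0 (t - \<beta> i))"
    by (simp add: sum_subtractf[symmetric]) (rule sum.cong, auto)
  moreover have "(\<Sum>i=1..d. hinge j t i)
      = (\<Sum>i=1..j. max 0 (t - \<beta> i)) + (\<Sum>i=j+1..d. max 0 (\<beta> i - t))"
    using sum_split_at[OF jd, of "hinge j t"] by (simp add: hinge_def)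
  ultimately show ?thesis
    using sum_split_at[OF jd, of "\<lambda>i. max 0 (\<beta> i - t)"] by (simp add: sum_subtractf)
qed

lemma weighted_partial_sums_eq_sum_share:
  "4 * (\<Sum>j=1..k. w j * (\<Sum>i=1..j. \<alpha> i - \<beta> i)) = (\<Sum>i=1..d. share i)"
proof -
  have "4 * (w j * (\<Sum>i=1..j. \<alpha> i - \<beta> i))
      = (\<Sum>i=1..d. 2 * w j * (hinge j (\<alpha> j) i + hinge j (\<alpha>t (j + 1)) i))"
    if j: "j \<in> {1..k}" for j
  proof -
    have le: "\<alpha> (j + 1) \<le> \<alpha> j" using alpha_antimono[of j "j + 1"] j k_less_d by simp
    have "\<alpha> (j + 1) \<le> \<alpha>t (j + 1) \<and> \<alpha>t (j + 1) \<le> \<alpha> j"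
    proof (cases "j = k")
      case True
      then show ?thesis using alpha_k_gt alpha_Suc_k_le by (simp add: \<alpha>t_def)
    next
      case False
      then show ?thesis using le j by (simp add: \<alpha>t_def)
    qed
    then have "(\<Sum>i=1..j. \<alpha> i - \<beta> i) = (\<Sum>i=1..d. hinge j (\<alpha> j) i)"
      "(\<Sum>i=1..j. \<alpha> i - \<beta> i) = (\<Sum>i=1..d. hinge j (\<alpha>t (j + 1)) i)"
      using j le partial_sum_eq_sum_hinge[of j] by auto
    then show ?thesis by (simp only: sum_distrib_left[symmetric] sum.distrib) simp
  qed
  then have "4 * (\<Sum>j=1..k. w j * (\<Sum>i=1..j. \<alpha> i - \<beta> i))
      = (\<Sum>j=1..k. \<Sum>i=1..d. 2 * w j * (hinge j (\<alpha> j) i + hinge j (\<alpha>t (j + 1)) i))"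
    by (simp add: sum_distrib_left)
  also have "\<dots> = (\<Sum>i=1..d. share i)" unfolding share_def by (rule sum.swap)
  finally show ?thesis .
qed

lemma share_nonneg: "0 \<le> share i"
  unfolding share_def hinge_def using w_nonneg
  by (intro sum_nonneg mult_nonneg_nonneg add_nonneg_nonneg) auto

lemma share_ge_sum_subset:
  assumes "J \<subseteq> {1..k}" and "\<And>j. j \<in> J \<Longrightarrow> g j \<le> hinge j (\<alpha> j) i + hinge j (\<alpha>t (j + 1)) i"
    and "\<And>j. j \<in> J \<Longrightarrow> 0 \<le> g j"
  shows "2 * (\<Sum>j\<in>J. w j * g j) \<le> share i"
proof -
  have "2 * (\<Sum>j\<in>J. w j * g j) = (\<Sum>j\<in>J. 2 * w j * g j)"
    by (simp add: sum_distrib_left mult.assoc)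
  also have "\<dots> \<le> (\<Sum>j\<in>J. 2 * w j * (hinge j (\<alpha> j) i + hinge j (\<alpha>t (j + 1)) i))"
    using assms w_nonneg by (intro sum_mono mult_left_mono) auto
  also have "\<dots> \<le> share i"
    unfolding share_def using assms w_nonneg
    by (intro sum_mono2) (auto simp: hinge_def intro!: mult_nonneg_nonneg add_nonneg_nonneg)
  finally show ?thesis .
qed

lemma share_ge_below:
  assumes "1 \<le> i"
  shows "2 * (\<Sum>j=i..k. w j * max 0 (\<alpha> j - \<beta> i)) \<le> share i"
  using assms by (intro share_ge_sum_subset) (auto simp: hinge_def)

lemma share_ge_above:
  "2 * (\<Sum>j=1..min (i - 1) k. w j * max 0 (\<beta> i - \<alpha>t (j + 1))) \<le> share i"
  by (intro share_ge_sum_subset) (auto simp: hinge_def)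

lemma telescope_below:
  assumes i: "1 \<le> i" "i \<le> k" and x: "x \<le> \<alpha> i"
  shows "((\<alpha> i - x)^2 - (max 0 (\<zeta> - x))^2) / (2 * \<alpha> i) \<le> (\<Sum>j=i..k. w j * max 0 (\<alpha> j - x))"
proof -
  define u where "u j = max 0 (\<alpha>t j - x)" for j
  have "u i = \<alpha> i - x" "u (k + 1) = max 0 (\<zeta> - x)" using i x by (auto simp: u_def \<alpha>t_def)
  then have "((\<alpha> i - x)^2 - (max 0 (\<zeta> - x))^2) / (2 * \<alpha> i)
      = (\<Sum>j=i..k. (u j^2 - u (j + 1)^2) / (2 * \<alpha> i))"
    using i sum_telescope[of i k "\<lambda>j. u j^2"] by (simp add: sum_divide_distrib[symmetric])
  also have "\<dots> \<le> (\<Sum>j=i..k. w j * max 0 (\<alpha> j - x))"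
  proof (rule sum_mono)
    fix j assume j: "j \<in> {i..k}"
    then have "\<alpha>t j = \<alpha> j" "\<alpha> j \<le> \<alpha> i"
      using alpha_antimono[of i j] i k_less_d by (auto simp: \<alpha>t_def)
    then show "(u j^2 - u (j + 1)^2) / (2 * \<alpha> i) \<le> w j * max 0 (\<alpha> j - x)"
      using square_hinge_below_step_le[of "\<alpha>t (j + 1)" "\<alpha>t j" "\<alpha> i" x]
        \<alpha>t_pos[of "j + 1"] \<alpha>t_Suc_le[of j] j i
      by (simp add: u_def w_def)
  qed
  finally show ?thesis .
qed

lemma telescope_above:
  assumes i: "1 \<le> i" "i \<le> d" and \<beta>i: "\<zeta> < \<beta> i" "\<alpha> i < \<beta> i"
  shows "(\<beta> i - max (\<alpha> i) \<zeta>)^2 / (2 * \<beta> i)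
    \<le> (\<Sum>j=1..min (i - 1) k. w j * max 0 (\<beta> i - \<alpha>t (j + 1)))"
proof -
  define m where "m = min (i - 1) k"
  define v where "v j = (max 0 (\<beta> i - \<alpha>t j))^2" for j
  have "\<alpha>t (m + 1) = max (\<alpha> i) \<zeta>"
    using i alpha_gt_zeta[of i] alpha_le_zeta[of i] by (auto simp: m_def \<alpha>t_def)
  then have "v (Suc m) = (\<beta> i - max (\<alpha> i) \<zeta>)^2" using \<beta>i by (simp add: v_def)
  moreover have "v 1 = 0" using beta_le_alpha_1[OF i] k_pos by (simp add: v_def \<alpha>t_def)
  ultimately have "(\<beta> i - max (\<alpha> i) \<zeta>)^2 / (2 * \<beta> i) = (\<Sum>j=1..m. (v (Suc j) - v j) / (2 * \<beta> i))"
    using sum_Suc_diff[of 1 m v] by (simp add: sum_divide_distrib[symmetric])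
  also have "\<dots> \<le> (\<Sum>j=1..m. w j * max 0 (\<beta> i - \<alpha>t (j + 1)))"
  proof (rule sum_mono)
    fix j assume "j \<in> {1..m}"
    then show "(v (Suc j) - v j) / (2 * \<beta> i) \<le> w j * max 0 (\<beta> i - \<alpha>t (j + 1))"
      using square_hinge_above_step_le[of "\<alpha>t (j + 1)" "\<alpha>t j" "\<beta> i"]
        \<alpha>t_pos[of "j + 1"] \<alpha>t_Suc_le[of j] \<beta>i zeta_pos
      by (simp add: v_def w_def)
  qed
  finally show ?thesis by (simp add: m_def)
qed

lemma coordinate_bound_below:
  assumes i: "1 \<le> i" "i \<le> d" and "\<zeta> < \<alpha> i" "\<beta> i \<le> \<alpha> i"
  shows "(sqrt (\<alpha> i) - sqrt (\<beta> i))^2 \<le> share i + \<zeta>"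
proof -
  have ik: "i \<le> k" using assms alpha_le_zeta[of i] by (meson not_le)
  have a: "0 < \<alpha> i" "0 \<le> \<beta> i" using assms zeta_pos beta_nonneg by auto
  have "max 0 (\<zeta> - \<beta> i) \<le> \<zeta>" using a zeta_pos by simp
  then have "(max 0 (\<zeta> - \<beta> i))^2 \<le> \<zeta> * \<alpha> i"
    using assms by (simp add: power2_eq_square mult_mono)
  then have "(max 0 (\<zeta> - \<beta> i))^2 / \<alpha> i \<le> \<zeta>" using a by (simp add: divide_le_eq mult.commute)
  moreover have "((\<alpha> i - \<beta> i)^2 - (max 0 (\<zeta> - \<beta> i))^2) / \<alpha> i \<le> share i"
    using telescope_below[OF i(1) ik assms(4)] share_ge_below[OF i(1)] by simp
  ultimately have "(\<alpha> i - \<beta> i)^2 / \<alpha> i \<le> share i + \<zeta>"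
    by (simp add: diff_divide_distrib)
  then show ?thesis using sqrt_diff_square_le_quotient[of "\<beta> i" "\<alpha> i"] a by linarith
qed

lemma coordinate_bound_above:
  assumes i: "1 \<le> i" "i \<le> d" and "\<zeta> < \<beta> i" "\<alpha> i < \<beta> i"
  shows "(sqrt (\<alpha> i) - sqrt (\<beta> i))^2 \<le> share i + \<zeta> + L * \<zeta>"
proof -
  have x: "0 < \<beta> i" "0 \<le> \<alpha> i" using assms zeta_pos alpha_nonneg by auto
  have share: "(\<beta> i - max (\<alpha> i) \<zeta>)^2 / \<beta> i \<le> share i"
    using telescope_above[OF assms] share_ge_above[of i] by simp
  show ?thesis
  proof (cases "\<zeta> \<le> \<alpha> i")
    case True
    have "0 \<le> L * \<zeta>" using L_nonneg zeta_pos by simp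
    moreover have "(sqrt (\<beta> i) - sqrt (\<alpha> i))^2 \<le> (\<beta> i - \<alpha> i)^2 / \<beta> i"
      using sqrt_diff_square_le_quotient x by simp
    ultimately show ?thesis using share True zeta_pos by (simp add: power2_commute)
  next
    case False
    have "(\<beta> i - \<zeta>) / \<beta> i \<le> ln (\<beta> i / \<zeta>)"
      using ln_le_minus_one[of "\<zeta> / \<beta> i"] x zeta_pos by (simp add: ln_div field_simps)
    also have "\<dots> \<le> ln (\<alpha> 1 / \<zeta>)"
      using beta_le_alpha_1[OF i] x zeta_pos by (simp add: divide_right_mono)
    moreover have "(\<beta> i - \<zeta>) / \<beta> i \<le> 1" using x zeta_pos by simp
    moreover have "1 \<le> real k" using k_pos by simp
    ultimately have "(\<beta> i - \<zeta>) / \<beta> i \<le> L" by (simp add: L_def)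
    then have "(\<beta> i - \<zeta>) / \<beta> i * \<zeta> \<le> L * \<zeta>" using zeta_pos by (intro mult_right_mono) auto
    moreover have "\<beta> i = (\<beta> i - \<zeta>)^2 / \<beta> i + \<zeta> + (\<beta> i - \<zeta>) / \<beta> i * \<zeta>"
      using x by (simp add: field_simps power2_eq_square)
    ultimately show ?thesis
      using share False sqrt_diff_square_le_max[of "\<beta> i" "\<alpha> i"] x assms by simp
  qed
qed

definition excess :: "real \<Rightarrow> real" where "excess t = (if \<zeta> < t then L * \<zeta> else 0)"

lemma excess_nonneg: "0 \<le> excess t"
  using L_nonneg zeta_pos by (simp add: excess_def)

lemma coordinate_bound:
  assumes "1 \<le> i" "i \<le> d"
  shows "(sqrt (\<alpha> i) - sqrt (\<beta> i))^2 \<le> share i + \<zeta> + excess (\<beta> i)"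
proof -
  consider "\<zeta> < \<alpha> i" "\<beta> i \<le> \<alpha> i" | "\<zeta> < \<beta> i" "\<alpha> i < \<beta> i" | "\<alpha> i \<le> \<zeta>" "\<beta> i \<le> \<zeta>"
    by linarith
  then show ?thesis
  proof cases
    case 1
    then show ?thesis using coordinate_bound_below[OF assms] excess_nonneg[of "\<beta> i"] by linarith
  next
    case 2
    then show ?thesis using coordinate_bound_above[OF assms] by (simp add: excess_def)
  next
    case 3
    then have "max (\<alpha> i) (\<beta> i) \<le> \<zeta>" by simp
    then show ?thesis
      using sqrt_diff_square_le_max[of "\<beta> i" "\<alpha> i"] alpha_nonneg beta_nonneg assms
        share_nonneg[of i] excess_nonneg[of "\<beta> i"]
      by fastforce
  qed
qed

lemma sum_excess: "(\<Sum>i=1..d. excess (\<beta> i)) = real k * L * \<zeta>"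
proof -
  have "(\<Sum>i=1..k. excess (\<alpha> i)) = real k * L * \<zeta>"
    using alpha_gt_zeta by (simp add: excess_def)
  moreover have "excess (\<alpha> i) = 0" if "i \<in> {k+1..d}" for i
    using alpha_le_zeta[of i] that by (simp add: excess_def)
  then have "(\<Sum>i=k+1..d. excess (\<alpha> i)) = 0" by simp
  ultimately show ?thesis
    using sum_split_at[of k d "\<lambda>i. excess (\<alpha> i)"] k_less_d sum_beta_eq[of excess] by simp
qed

theorem sqrt_distance_bound:
  "(\<Sum>i=1..d. (sqrt (\<alpha> i) - sqrt (\<beta> i))^2)
    \<le> 4 * (\<Sum>j=1..k. w j * (\<Sum>i=1..j. \<alpha> i - \<beta> i)) + real d * \<zeta> + real k * L * \<zeta>"
proof -
  have "(\<Sum>i=1..d. (sqrt (\<alpha> i) - sqrt (\<beta> i))^2) \<le> (\<Sum>i=1..d. share i + \<zeta> + excess (\<beta> i))"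
    using coordinate_bound by (intro sum_mono) auto
  also have "\<dots> = 4 * (\<Sum>j=1..k. w j * (\<Sum>i=1..j. \<alpha> i - \<beta> i)) + real d * \<zeta> + real k * L * \<zeta>"
    using weighted_partial_sums_eq_sum_share sum_excess by (simp add: sum.distrib)
  finally show ?thesis .
qed

end

theorem mainTheorem16:
  fixes \<zeta> :: real and k d :: nat and \<alpha> \<beta> :: "nat \<Rightarrow> real" and \<sigma> :: "nat \<Rightarrow> nat"
  assumes "\<zeta> > 0" and "1 \<le> k" and "k < d"
    and "\<And>i j. 1 \<le> i \<Longrightarrow> i \<le> j \<Longrightarrow> j \<le> d \<Longrightarrow> \<alpha> j \<le> \<alpha> i"
    and "\<alpha> k > \<zeta>" and "\<zeta> \<ge> \<alpha> (k + 1)" and "\<alpha> d \<ge> 0"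
    and "\<sigma> permutes {1..d}" and "\<And>i. \<beta> i = \<alpha> (\<sigma> i)"
  shows "(let \<alpha>' = (\<lambda>j. if j \<le> k then \<alpha> j else \<zeta>);
              L = min (real k) (ln (\<alpha> 1 / \<zeta>))
          in (\<Sum>i=1..d. (sqrt (\<alpha> i) - sqrt (\<beta> i))^2)
             \<le> 4 * (\<Sum>j=1..k. (\<alpha>' j - \<alpha>' (j + 1)) / \<alpha>' j * (\<Sum>i=1..j. \<alpha> i - \<beta> i))
               + real d * \<zeta> + 8 * real k * L * \<zeta>)"
proof -
  interpret sqrt_rearrangement \<zeta> k d \<alpha> \<beta> \<sigma> using assms by unfold_locales auto
  have "0 \<le> real k * L * \<zeta>" using L_nonneg zeta_pos by simp
  then show ?thesis
    using sqrt_distance_bound unfolding Let_def w_def \<alpha>t_def L_def by linarith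
qed

end
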